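(* Let $p>\frac{3d}{d+2}$, let $\tilde\sigma_c:Y\to Y$ be a given map (constitutive law), and let $\mathcal{D}=\{(\epsilon,\tilde\sigma)\in Y\times Y:\tilde\sigma=\tilde\sigma_c(\epsilon)\}$. Assume that $\operatorname{dist}(\cdot,\mathcal{D})$ is $(p,q)$-coercive. Define on $V$ $$I(v)=\begin{cases}\int_\Omega\operatorname{dist}(v,\mathcal{D})\,dx,&v\in\mathcal{C}_{\mathrm{nl}},\\+\infty,&\text{else},\end{cases}\qquad I^*(v)=\begin{cases}\int_\Omega\mathcal{Q}_{\mathcal{A}}\operatorname{dist}(v,\mathcal{D})\,dx,&v\in\mathcal{C}_{\mathrm{nl}},\\+\infty,&\text{else}.\end{cases}$$ Suppose the system has a weak solution, i.e. $\min_{v\in\mathcal{C}_{\mathrm{nl}}}I(v)=0$. Then a function $v^*\in\mathcal{C}_{\mathrm{nl}}$ is a minimiser of $I^*$ if and only if $v^*(x)\in\{z\in Y\times Y:\mathcal{Q}_{\mathcal{A}}\operatorname{dist}(z,\mathcal{D})=0\}$ for almost every $x\in\Omega$. Moreover, if $\{z:\mathcal{Q}_{\mathcal{A}}\operatorname{dist}(z,\mathcal{D})=0\}=\mathcal{D}$, then every such $v^*=(\epsilon,\tilde\sigma)$ is a weak solution, i.e. $v^*\in\mathcal{C}_{\mathrm{nl}}$ and $\tilde\sigma=\tilde\sigma_c(\epsilon)$ a.e. in $\Omega$.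
   Context: $d\ge2$, $1<p<\infty$, $q=p/(p-1)$, $Y=\{A\in\mathbb{R}^{d\times d}:A=A^T,\operatorname{tr}A=0\}$ with Frobenius product and norm. $\operatorname{dist}((\epsilon_1,\tilde\sigma_1),(\epsilon_2,\tilde\sigma_2))=\frac1p|\epsilon_1-\epsilon_2|^p+\frac1q|\tilde\sigma_1-\tilde\sigma_2|^q$, $\operatorname{dist}(z,\mathcal{D})=\inf_{w\in\mathcal{D}}\operatorname{dist}(z,w)$. A function $F:Y\times Y\to\mathbb{R}$ is $(p,q)$-coercive if there are $C_1,C_2>0$, $\gamma\in\mathbb{R}$ with $F(\epsilon,\tilde\sigma)\ge C_1(|\epsilon|^p+|\tilde\sigma|^q)-C_2-\gamma\,\epsilon\cdot\tilde\sigma$. $\Omega\subset\mathbb{R}^d$ bounded, simply connected, open, $C^1$ boundary with outer normal $\nu$; $V=L_p(\Omega;Y)\times L_q(\Omega;Y)$; $\partial\Omega$ is the closure of $\Gamma_D\cup\Gamma_R$ for disjoint relatively open $C^1$ pieces with $\mathcal{H}^{d-1}$-null relative boundaries (no Neumann part). Data $f\in W^{-1}_q(\Omega;\mathbb{R}^d)$, $g\in W^{1-1/p}_p(\Gamma_D;\mathbb{R}^d)$, $g_\nu\in W^{1-1/p}_p(\Gamma_R)$, $h_\tau\in W^{-1/q}_q(\Gamma_R;\mathbb{R}^d)$, $\lambda\ge0$, $P_T$ tangential projection. $\mathcal{C}_{\mathrm{nl}}$ is the set of $(\epsilon,\tilde\sigma)\in V$ for which there exist $u\in W^1_p(\Omega;\mathbb{R}^d)$,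 $\pi\in L_q(\Omega)$ with $\epsilon=\frac12(\nabla u+\nabla u^T)$, $\operatorname{div}u=0$, $-\operatorname{div}\tilde\sigma=f-\nabla\pi-(u\cdot\nabla)u$ in $W^{-1}_q$, $u=g$ on $\Gamma_D$, $u\cdot\nu=g_\nu$ and $P_T(\tilde\sigma\nu+\lambda u)=h_\tau$ on $\Gamma_R$. $\mathcal{Q}_{\mathcal{A}}F(z)=\inf_{\psi\in\mathcal{T}}\int_{\mathbb{T}_d}F(z+\psi)$ where $\mathcal{T}$ consists of $\psi=(\psi_1,\psi_2)\in C^\infty(\mathbb{T}_d;Y\times Y)$ with zero mean, $\partial_{ij}(\psi_1)_{kl}+\partial_{kl}(\psi_1)_{ij}-\partial_{il}(\psi_1)_{kj}-\partial_{kj}(\psi_1)_{il}=0$ for all $i,j,k,l$, and $\operatorname{div}(\psi_2-\pi\mathrm{Id})=0$ for some smooth $\pi$. *)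

theory Defs
  imports "HOL-Analysis.Analysis"
begin

type_synonym 'd mat = "real^'d^'d"

text \<open>Y: symmetric trace-free d x d matrices (the norm / inner product on real^'d^'d
  is the Frobenius one).\<close>
definition Ysp :: "'d::finite mat set" where
  "Ysp = {A. transpose A = A \<and> trace A = 0}"

definition conjexp :: "real \<Rightarrow> real" where
  "conjexp p = p / (p - 1)"

definition dist_pq :: "real \<Rightarrow> ('d::finite mat \<times> 'd mat) \<Rightarrow> ('d mat \<times> 'd mat) \<Rightarrow> real" where
  "dist_pq p z w = (1/p) * norm (fst z - fst w) powr p
                 + (1/conjexp p) * norm (snd z - snd w) powr (conjexp p)"

definition Dset :: "('d::finite mat \<Rightarrow> 'd mat) \<Rightarrow> ('d mat \<times> 'd mat) set" where
  "Dset sc = {(e, sc e) | e. e \<in> Ysp}"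

definition distD :: "real \<Rightarrow> ('d::finite mat \<Rightarrow> 'd mat) \<Rightarrow> ('d mat \<times> 'd mat) \<Rightarrow> real" where
  "distD p sc z = Inf {dist_pq p z w | w. w \<in> Dset sc}"

definition pq_coercive :: "real \<Rightarrow> ('d::finite mat \<times> 'd mat \<Rightarrow> real) \<Rightarrow> bool" where
  "pq_coercive p F \<longleftrightarrow> (\<exists>C1>0. \<exists>C2>0. \<exists>\<gamma>::real. \<forall>e\<in>Ysp. \<forall>s\<in>Ysp.
      F (e, s) \<ge> C1 * (norm e powr p + norm s powr (conjexp p)) - C2 - \<gamma> * (e \<bullet> s))"

definition pd :: "'d::finite \<Rightarrow> (real^'d \<Rightarrow> real) \<Rightarrow> real^'d \<Rightarrow> real" where
  "pd i f x = frechet_derivative f (at x) (axis i 1)"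

coinductive smooth_real :: "(real^'d::finite \<Rightarrow> real) \<Rightarrow> bool" where
  "(\<forall>x. f differentiable (at x)) \<Longrightarrow> (\<forall>i. smooth_real (pd i f)) \<Longrightarrow> smooth_real f"

text \<open>Functions on the torus = 1-periodic functions on R^d.\<close>
definition periodic1 :: "(real^'d::finite \<Rightarrow> 'b) \<Rightarrow> bool" where
  "periodic1 f \<longleftrightarrow> (\<forall>x i. f (x + axis i 1) = f x)"

definition smooth_mat :: "(real^'d::finite \<Rightarrow> 'd mat) \<Rightarrow> bool" where
  "smooth_mat A \<longleftrightarrow> (\<forall>i j. smooth_real (\<lambda>x. A x $ i $ j))"

definition Tclass :: "(real^'d::finite \<Rightarrow> 'd mat \<times> 'd mat) set" where
  "Tclass = {\<psi>.
     smooth_mat (\<lambda>x. fst (\<psi> x)) \<and> smooth_mat (\<lambda>x. snd (\<psi> x)) \<and> periodic1 \<psi> \<and>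
     (\<forall>x. fst (\<psi> x) \<in> Ysp \<and> snd (\<psi> x) \<in> Ysp) \<and>
     integral (cbox 0 1) (\<lambda>x. fst (\<psi> x)) = 0 \<and> integral (cbox 0 1) (\<lambda>x. snd (\<psi> x)) = 0 \<and>
     (\<forall>i j k l x.
        pd i (pd j (\<lambda>y. fst (\<psi> y) $ k $ l)) x + pd k (pd l (\<lambda>y. fst (\<psi> y) $ i $ j)) x
      - pd i (pd l (\<lambda>y. fst (\<psi> y) $ k $ j)) x - pd k (pd j (\<lambda>y. fst (\<psi> y) $ i $ l)) x = 0) \<and>
     (\<exists>\<pi>. smooth_real \<pi> \<and> periodic1 \<pi> \<and>
        (\<forall>i x. (\<Sum>j\<in>UNIV. pd j (\<lambda>y. snd (\<psi> y) $ i $ j - (if i = j then \<pi> y else 0)) x) = 0))}"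

definition QA :: "('d::finite mat \<times> 'd mat \<Rightarrow> real) \<Rightarrow> 'd mat \<times> 'd mat \<Rightarrow> real" where
  "QA F z = Inf {integral (cbox 0 1) (\<lambda>x. F (fst z + fst (\<psi> x), snd z + snd (\<psi> x))) | \<psi>. \<psi> \<in> Tclass}"

definition Lsp :: "real \<Rightarrow> (real^'d::finite) set \<Rightarrow> (real^'d \<Rightarrow> 'd mat) set" where
  "Lsp r \<Omega> = {f. f \<in> borel_measurable (lebesgue_on \<Omega>) \<and> (\<forall>x\<in>\<Omega>. f x \<in> Ysp) \<and>
                   integrable (lebesgue_on \<Omega>) (\<lambda>x. norm (f x) powr r)}"

definition Vsp :: "real \<Rightarrow> (real^'d::finite) set \<Rightarrow> (real^'d \<Rightarrow> 'd mat \<times> 'd mat) set" where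
  "Vsp p \<Omega> = {v. (\<lambda>x. fst (v x)) \<in> Lsp p \<Omega> \<and> (\<lambda>x. snd (v x)) \<in> Lsp (conjexp p) \<Omega>}"

definition Ifun :: "real \<Rightarrow> ('d::finite mat \<Rightarrow> 'd mat) \<Rightarrow> (real^'d) set
      \<Rightarrow> (real^'d \<Rightarrow> 'd mat \<times> 'd mat) set \<Rightarrow> (real^'d \<Rightarrow> 'd mat \<times> 'd mat) \<Rightarrow> ennreal" where
  "Ifun p sc \<Omega> C v = (if v \<in> C then \<integral>\<^sup>+ x. ennreal (distD p sc (v x)) \<partial>(lebesgue_on \<Omega>) else \<infinity>)"

definition Istar :: "real \<Rightarrow> ('d::finite mat \<Rightarrow> 'd mat) \<Rightarrow> (real^'d) set
      \<Rightarrow> (real^'d \<Rightarrow> 'd mat \<times> 'd mat) set \<Rightarrow> (real^'d \<Rightarrow> 'd mat \<times> 'd mat) \<Rightarrow> ennreal" where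
  "Istar p sc \<Omega> C v = (if v \<in> C then \<integral>\<^sup>+ x. ennreal (QA (distD p sc) (v x)) \<partial>(lebesgue_on \<Omega>) else \<infinity>)"

text \<open>C^1 boundary: locally, after a rigid motion, \<Omega> is the subgraph of a C^1 function.\<close>
definition C1_boundary :: "(real^'d::finite) set \<Rightarrow> bool" where
  "C1_boundary \<Omega> \<longleftrightarrow> (\<forall>x\<in>frontier \<Omega>. \<exists>r>0. \<exists>R k. orthogonal_transformation R \<and>
     (\<exists>(h::real^'d \<Rightarrow> real) (Dh::real^'d \<Rightarrow> ((real^'d) \<Rightarrow>\<^sub>L real)).
        (\<forall>y z. (\<forall>i. i \<noteq> k \<longrightarrow> y $ i = z $ i) \<longrightarrow> h y = h z) \<and>
        (\<forall>y. (h has_derivative blinfun_apply (Dh y)) (at y)) \<and> continuous_on UNIV Dh \<and>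
        \<Omega> \<inter> ball x r = {y \<in> ball x r. R (y - x) $ k < h (R (y - x))}))"

end

theory Submission
  imports Defs
begin

text \<open>Taking the zero test field shows \<open>QA F \<le> F\<close>, so the weak solution \<open>v0\<close> gives
  \<open>I*(v0) \<le> I(v0) = 0\<close>; hence the minimisers of \<open>I*\<close> over \<open>V\<close> are exactly the \<open>v \<in> C_nl\<close> for which
  the nonnegative integrand \<open>QA dist(v, D)\<close> vanishes almost everywhere, and if the zero set of
  \<open>QA dist(\<cdot>, D)\<close> is \<open>D\<close> this says \<open>v(x) \<in> D\<close> a.e.  The only analytic input is measurability:
  \<open>dist(\<cdot>, D)\<close> is continuous, because near-minimisers in \<open>D\<close> stay in a bounded set, so \<open>QA dist(\<cdot>, D)\<close>
  is an infimum of continuous functions and thus upper semicontinuous.\<close>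

lemma conjexp_gt_1: "1 < p \<Longrightarrow> 1 < conjexp p"
  by (simp add: conjexp_def)

lemma dist_pq_eq_dist_pq_diff: "dist_pq p z w = dist_pq p (z - w) 0"
  by (simp add: dist_pq_def)

lemma dist_pq_nonneg: "1 < p \<Longrightarrow> 0 \<le> dist_pq p z w"
  using conjexp_gt_1[of p] by (simp add: dist_pq_def)

lemma continuous_on_dist_pq_0: "1 < p \<Longrightarrow> continuous_on UNIV (\<lambda>a. dist_pq p a 0)"
  unfolding dist_pq_def using conjexp_gt_1[of p]
  by (intro continuous_intros continuous_on_powr') auto

lemma le_max_one_powr:
  fixes x p :: real
  assumes "1 \<le> p" "0 \<le> x"
  shows "x \<le> max 1 (x powr p)"
proof (cases "x \<le> 1")
  case False
  then have "x powr 1 \<le> x powr p" using assms by (intro powr_mono) auto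
  then show ?thesis using assms by simp
qed simp

lemma bounded_dist_pq_sublevel:
  assumes p: "1 < p"
  shows "bounded {a. dist_pq p a 0 \<le> M}"
proof -
  let ?q = "conjexp p"
  have q: "1 < ?q" using conjexp_gt_1[OF p] .
  have "norm a \<le> max 1 (p * M) + max 1 (?q * M)" if "dist_pq p a 0 \<le> M" for a
  proof -
    have "0 \<le> norm (fst a) powr p / p" "0 \<le> norm (snd a) powr ?q / ?q"
      using p q by auto
    then have fst_part: "norm (fst a) powr p / p \<le> M" and snd_part: "norm (snd a) powr ?q / ?q \<le> M"
      using that by (auto simp: dist_pq_def)
    have "norm (fst a) \<le> max 1 (p * M)"
      using le_max_one_powr[of p "norm (fst a)"] fst_part p by (auto simp: field_simps)
    moreover have "norm (snd a) \<le> max 1 (?q * M)"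
      using le_max_one_powr[of ?q "norm (snd a)"] snd_part q by (auto simp: field_simps)
    ultimately show ?thesis using norm_Pair_le[of "fst a" "snd a"] by simp
  qed
  then show ?thesis unfolding bounded_iff by blast
qed

lemma continuous_on_Inf_translates:
  fixes G :: "'a::{real_normed_vector,heine_borel} \<Rightarrow> real"
  assumes G_cont: "continuous_on UNIV G" and G_nonneg: "\<And>a. 0 \<le> G a"
    and G_coercive: "\<And>M. bounded {a. G a \<le> M}" and D: "D \<noteq> {}"
  shows "continuous_on UNIV (\<lambda>z. Inf ((\<lambda>w. G (z - w)) ` D))"
  unfolding continuous_on_iff
proof (intro ballI allI impI)
  define f where "f z = Inf ((\<lambda>w. G (z - w)) ` D)" for z
  have f_le: "f z \<le> G (z - w)" if "w \<in> D" for z w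
    unfolding f_def using that G_nonneg by (intro cInf_lower bdd_belowI[of _ 0]) auto
  have f_lt: "\<exists>w\<in>D. G (z - w) < c" if "f z < c" for z c
    using that D cInf_lessD[of "(\<lambda>w. G (z - w)) ` D" c] unfolding f_def by auto
  fix z0 and e :: real
  assume "0 < e"
  define \<epsilon> where "\<epsilon> = min 1 (e / 3)"
  have \<epsilon>: "0 < \<epsilon>" "\<epsilon> \<le> 1" "2 * \<epsilon> < e" using \<open>0 < e\<close> by (auto simp: \<epsilon>_def)
  define M where "M = f z0 + 3"
  obtain R where R: "\<And>a. G a \<le> M \<Longrightarrow> norm a \<le> R"
    using G_coercive[of M] unfolding bounded_iff by blast
  have "uniformly_continuous_on (cball 0 (R + 1)) G"
    using G_cont by (intro compact_uniformly_continuous) (auto intro: continuous_on_subset)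
  then obtain \<delta> where "\<delta> > 0" and \<delta>: "\<And>a b. a \<in> cball 0 (R + 1) \<Longrightarrow> b \<in> cball 0 (R + 1) \<Longrightarrow>
      dist b a < \<delta> \<Longrightarrow> dist (G b) (G a) < \<epsilon>"
    unfolding uniformly_continuous_on_def using \<epsilon>(1) by metis
  \<comment> \<open>A near-minimiser for z stays bounded, so it is almost as good for any nearby z'.\<close>
  have one_sided: "f z' < f z + 2 * \<epsilon>" if "dist z' z < min \<delta> 1" "f z + \<epsilon> \<le> M" for z z'
  proof -
    obtain w where w: "w \<in> D" "G (z - w) < f z + \<epsilon>" using f_lt[of z "f z + \<epsilon>"] \<epsilon>(1) by auto
    have "norm (z - w) \<le> R" using w(2) that(2) by (intro R) simp
    moreover have "norm (z' - w) \<le> norm (z' - z) + norm (z - w)"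
      using norm_triangle_ineq[of "z' - z" "z - w"] by simp
    ultimately have "dist (G (z' - w)) (G (z - w)) < \<epsilon>"
      using that(1) by (intro \<delta>) (auto simp: dist_norm norm_minus_commute)
    then show ?thesis using f_le[OF w(1), of z'] w(2) by (auto simp: dist_real_def)
  qed
  show "\<exists>d>0. \<forall>z\<in>UNIV. dist z z0 < d \<longrightarrow> dist (f z) (f z0) < e"
  proof (intro exI[of _ "min \<delta> 1"] conjI ballI impI)
    fix z assume z: "dist z z0 < min \<delta> 1"
    have up: "f z < f z0 + 2 * \<epsilon>" using one_sided[OF z] \<epsilon> by (simp add: M_def)
    have "f z0 < f z + 2 * \<epsilon>" using one_sided[of z0 z] z up \<epsilon> by (simp add: M_def dist_commute)
    then show "dist (f z) (f z0) < e" using up \<epsilon> by (simp add: dist_real_def)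
  qed (use \<open>\<delta> > 0\<close> in simp)
qed

lemma zero_in_Ysp: "0 \<in> Ysp"
  by (simp add: Ysp_def trace_def transpose_def vec_eq_iff)

lemma Dset_nonempty: "Dset sc \<noteq> {}"
  using zero_in_Ysp by (auto simp: Dset_def)

lemma distD_eq_Inf_translates: "distD p sc z = Inf ((\<lambda>w. dist_pq p (z - w) 0) ` Dset sc)"
  unfolding distD_def dist_pq_eq_dist_pq_diff[of p z] by (rule arg_cong[where f = Inf]) auto

lemma distD_nonneg: "1 < p \<Longrightarrow> 0 \<le> distD p sc z"
  unfolding distD_eq_Inf_translates using Dset_nonempty
  by (intro cInf_greatest) (auto intro: dist_pq_nonneg)

lemma continuous_on_distD: "1 < p \<Longrightarrow> continuous_on UNIV (distD p sc)"
  unfolding distD_eq_Inf_translates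
  by (intro continuous_on_Inf_translates continuous_on_dist_pq_0 dist_pq_nonneg
      bounded_dist_pq_sublevel Dset_nonempty)

lemma pd_zero: "pd i (\<lambda>x. 0) = (\<lambda>x. 0)"
  by (simp add: pd_def fun_eq_iff frechet_derivative_at[OF has_derivative_const, symmetric])

lemma smooth_real_zero: "smooth_real (\<lambda>x. 0)"
proof -
  have "f = (\<lambda>x. 0) \<Longrightarrow> smooth_real f" for f :: "real^'d \<Rightarrow> real"
    by (coinduction arbitrary: f rule: smooth_real.coinduct) (auto simp: pd_zero)
  then show ?thesis by simp
qed

lemma zero_in_Tclass: "(\<lambda>x. 0) \<in> Tclass"
  unfolding Tclass_def
  by (auto simp: smooth_mat_def smooth_real_zero periodic1_def zero_in_Ysp pd_zero
      intro!: exI[of _ "\<lambda>x. 0"])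

lemma smooth_real_imp_continuous: "smooth_real f \<Longrightarrow> continuous_on UNIV f"
  by (erule smooth_real.cases) (auto intro: differentiable_imp_continuous_on simp: differentiable_on_def)

lemma smooth_mat_imp_continuous: "smooth_mat A \<Longrightarrow> continuous_on UNIV A"
proof -
  assume "smooth_mat A"
  then have "continuous_on UNIV (\<lambda>x. \<chi> i j. A x $ i $ j)"
    by (intro continuous_on_vec_lambda) (auto simp: smooth_mat_def intro: smooth_real_imp_continuous)
  then show ?thesis by simp
qed

lemma Tclass_continuous: "\<psi> \<in> Tclass \<Longrightarrow> continuous_on UNIV \<psi>"
  using continuous_on_Pair[of UNIV "\<lambda>x. fst (\<psi> x)" "\<lambda>x. snd (\<psi> x)"]
  by (simp add: Tclass_def smooth_mat_imp_continuous)

lemma QA_eq_Inf: "QA F z = Inf ((\<lambda>\<psi>. integral (cbox 0 1) (\<lambda>x. F (z + \<psi> x))) ` Tclass)"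
  unfolding QA_def plus_prod_def by (rule arg_cong[where f = Inf]) auto

lemma integral_nonneg_unconditional:
  fixes f :: "'a::euclidean_space \<Rightarrow> real"
  assumes "\<And>x. x \<in> S \<Longrightarrow> 0 \<le> f x"
  shows "0 \<le> integral S f"
proof (cases "f integrable_on S")
  case True
  then show ?thesis using assms by (rule integral_nonneg)
qed (simp add: not_integrable_integral)

lemma QA_nonneg:
  assumes "\<And>z. 0 \<le> F z"
  shows "0 \<le> QA F z"
  unfolding QA_eq_Inf using zero_in_Tclass
  by (intro cInf_greatest) (auto intro!: integral_nonneg_unconditional assms)

lemma QA_le_integral:
  assumes "\<And>z. 0 \<le> F z" and "\<psi> \<in> Tclass"
  shows "QA F z \<le> integral (cbox 0 1) (\<lambda>x. F (z + \<psi> x))"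
proof -
  have "bdd_below ((\<lambda>\<psi>. integral (cbox 0 1) (\<lambda>x. F (z + \<psi> x))) ` Tclass)"
    by (intro bdd_belowI2[where m = 0] integral_nonneg_unconditional assms(1))
  then show ?thesis unfolding QA_eq_Inf using assms(2) by (intro cInf_lower) auto
qed

lemma QA_le:
  fixes F :: "'d::finite mat \<times> 'd mat \<Rightarrow> real"
  assumes "\<And>z. 0 \<le> F z"
  shows "QA F z \<le> F z"
proof -
  have "(0::real^'d) \<in> cbox 0 1" by (simp add: mem_box_cart)
  then have "cbox (0::real^'d) 1 \<noteq> {}" by blast
  then show ?thesis
    using QA_le_integral[where F = F and z = z, OF assms zero_in_Tclass]
    by (simp add: content_cbox_if_cart)
qed

lemma continuous_on_integral_translate:
  fixes F :: "'a::real_normed_vector \<Rightarrow> real" and \<psi> :: "'b::euclidean_space \<Rightarrow> 'a"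
  assumes "continuous_on UNIV F" "continuous_on UNIV \<psi>"
  shows "continuous_on UNIV (\<lambda>z. integral (cbox a b) (\<lambda>x. F (z + \<psi> x)))"
proof -
  have "continuous_on UNIV (\<lambda>(z, x). F (z + \<psi> x))"
    using assms by (auto simp: case_prod_beta intro!: continuous_on_compose2[OF assms(1)]
        continuous_intros continuous_on_compose2[OF assms(2)])
  then show ?thesis
    by (intro integral_continuous_on_param) (auto intro: continuous_on_subset)
qed

lemma borel_measurable_Inf_continuous:
  fixes f :: "'i \<Rightarrow> 'a::topological_space \<Rightarrow> real"
  assumes "I \<noteq> {}" and cont: "\<And>i. i \<in> I \<Longrightarrow> continuous_on UNIV (f i)"
    and bdd: "\<And>i x. i \<in> I \<Longrightarrow> b \<le> f i x"
  shows "(\<lambda>x. Inf ((\<lambda>i. f i x) ` I)) \<in> borel_measurable borel"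
proof -
  have "bdd_below ((\<lambda>i. f i x) ` I)" for x
    by (intro bdd_belowI2[where m = b] bdd)
  then have "Inf ((\<lambda>i. f i x) ` I) < c \<longleftrightarrow> (\<exists>i\<in>I. f i x < c)" for x c
    using cInf_less_iff[of "(\<lambda>i. f i x) ` I" c] assms(1) by auto
  then have "{x. Inf ((\<lambda>i. f i x) ` I) < c} = (\<Union>i\<in>I. {x. f i x < c})" for c
    by auto
  moreover have "open {x. f i x < c}" if "i \<in> I" for i c
    using cont[OF that] by (intro open_Collect_less) (auto intro: continuous_intros)
  ultimately have "open {x. Inf ((\<lambda>i. f i x) ` I) < c}" for c
    by auto
  then show ?thesis
    by (simp add: borel_measurable_iff_less borel_open)
qed

lemma borel_measurable_QA:
  assumes "continuous_on UNIV F" "\<And>z. 0 \<le> F z"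
  shows "QA F \<in> borel_measurable borel"
  unfolding QA_eq_Inf using zero_in_Tclass
  by (intro borel_measurable_Inf_continuous[where b = 0] continuous_on_integral_translate
      Tclass_continuous integral_nonneg_unconditional assms) auto

lemma Vsp_borel_measurable: "v \<in> Vsp p \<Omega> \<Longrightarrow> v \<in> borel_measurable (lebesgue_on \<Omega>)"
  using borel_measurable_Pair[of "\<lambda>x. fst (v x)" "lebesgue_on \<Omega>" "\<lambda>x. snd (v x)"]
  by (simp add: Vsp_def Lsp_def)

lemma Vsp_in_Ysp: "v \<in> Vsp p \<Omega> \<Longrightarrow> x \<in> \<Omega> \<Longrightarrow> v x \<in> Ysp \<times> Ysp"
  by (simp add: Vsp_def Lsp_def mem_Times_iff)

lemma Istar_le_Ifun:
  assumes "1 < p"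
  shows "Istar p sc \<Omega> C v \<le> Ifun p sc \<Omega> C v"
proof (cases "v \<in> C")
  case True
  have "(\<integral>\<^sup>+ x. ennreal (QA (distD p sc) (v x)) \<partial>lebesgue_on \<Omega>)
      \<le> (\<integral>\<^sup>+ x. ennreal (distD p sc (v x)) \<partial>lebesgue_on \<Omega>)"
    by (intro nn_integral_mono ennreal_leI QA_le distD_nonneg[OF assms])
  then show ?thesis using True by (simp add: Istar_def Ifun_def)
qed (simp add: Istar_def Ifun_def)

lemma Istar_eq_0_iff:
  assumes p: "1 < p" and "v \<in> C" "C \<subseteq> Vsp p \<Omega>"
  shows "Istar p sc \<Omega> C v = 0 \<longleftrightarrow> (AE x in lebesgue_on \<Omega>. QA (distD p sc) (v x) = 0)"
proof -
  have "v \<in> borel_measurable (lebesgue_on \<Omega>)"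
    using assms(2,3) by (blast intro: Vsp_borel_measurable)
  moreover have "QA (distD p sc) \<in> borel_measurable borel"
    by (intro borel_measurable_QA continuous_on_distD[OF p] distD_nonneg[OF p])
  ultimately have "(\<lambda>x. QA (distD p sc) (v x)) \<in> borel_measurable (lebesgue_on \<Omega>)"
    by (rule measurable_compose)
  then have "Istar p sc \<Omega> C v = 0 \<longleftrightarrow> (AE x in lebesgue_on \<Omega>. ennreal (QA (distD p sc) (v x)) = 0)"
    using assms(2) by (simp add: Istar_def nn_integral_0_iff_AE)
  also have "\<dots> \<longleftrightarrow> (AE x in lebesgue_on \<Omega>. QA (distD p sc) (v x) = 0)"
    using QA_nonneg[where F = "distD p sc", OF distD_nonneg[OF p]]
    by (simp add: ennreal_eq_0_iff antisym_conv)
  finally show ?thesis .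
qed

lemma AE_constitutive_law:
  assumes zero_set: "{z. z \<in> Ysp \<times> Ysp \<and> Q z = 0} = Dset sc" and v: "v \<in> Vsp p \<Omega>"
    and "AE x in lebesgue_on \<Omega>. Q (v x) = 0"
  shows "AE x in lebesgue_on \<Omega>. snd (v x) = sc (fst (v x))"
  using assms(3) AE_space[of "lebesgue_on \<Omega>"]
proof eventually_elim
  case (elim x)
  then have "v x \<in> {z. z \<in> Ysp \<times> Ysp \<and> Q z = 0}"
    using Vsp_in_Ysp[OF v] by simp
  then have "v x \<in> Dset sc"
    by (simp only: zero_set)
  then show ?case
    by (auto simp: Dset_def)
qed

theorem proposition6p1:
  fixes \<Omega> :: "(real^'d::finite) set"
    and p :: real
    and sc :: "'d mat \<Rightarrow> 'd mat"
    and Cnl :: "(real^'d \<Rightarrow> 'd mat \<times> 'd mat) set"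
  assumes "CARD('d) \<ge> 2"
    and "1 < p"
    and "p > 3 * real CARD('d) / (real CARD('d) + 2)"
    and "bounded \<Omega>" "open \<Omega>" "simply_connected \<Omega>" "C1_boundary \<Omega>"
    and "\<forall>e\<in>Ysp. sc e \<in> Ysp"
    and "pq_coercive p (distD p sc)"
    and "Cnl \<subseteq> Vsp p \<Omega>"
    and "\<exists>v\<in>Cnl. Ifun p sc \<Omega> Cnl v = 0 \<and> (\<forall>w\<in>Cnl. Ifun p sc \<Omega> Cnl v \<le> Ifun p sc \<Omega> Cnl w)"
  shows "(\<forall>v\<in>Cnl. (\<forall>w\<in>Vsp p \<Omega>. Istar p sc \<Omega> Cnl v \<le> Istar p sc \<Omega> Cnl w)
              \<longleftrightarrow> (AE x in lebesgue_on \<Omega>. QA (distD p sc) (v x) = 0)) \<and>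
         ({z. z \<in> Ysp \<times> Ysp \<and> QA (distD p sc) z = 0} = Dset sc \<longrightarrow>
           (\<forall>v\<in>Cnl. (AE x in lebesgue_on \<Omega>. QA (distD p sc) (v x) = 0) \<longrightarrow>
              (v \<in> Cnl \<and> (AE x in lebesgue_on \<Omega>. snd (v x) = sc (fst (v x))))))"
proof -
  note p = \<open>1 < p\<close>
  obtain v0 where v0: "v0 \<in> Cnl" "Ifun p sc \<Omega> Cnl v0 = 0"
    using assms(11) by blast
  then have "Istar p sc \<Omega> Cnl v0 = 0"
    using Istar_le_Ifun[OF p, of sc \<Omega> Cnl v0] by simp
  then have minimiser_iff: "(\<forall>w\<in>Vsp p \<Omega>. Istar p sc \<Omega> Cnl v \<le> Istar p sc \<Omega> Cnl w)
      \<longleftrightarrow> Istar p sc \<Omega> Cnl v = 0" for v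
    using v0(1) assms(10) by (metis subsetD zero_le le_zero_eq)
  show ?thesis
    using minimiser_iff Istar_eq_0_iff[OF p _ assms(10)] AE_constitutive_law assms(10) by blast
qed

end
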